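(* Let $X$ and $Y$ be two configurations of the same polygonal chain (open or closed), each bar of which carries a symmetric slender adornment with that bar as base, and suppose the configuration $Y$ of the base chain is an expansion of the configuration $X$. If the adornments attached to the bars of $X$ pairwise do not overlap, then the corresponding adornments attached to the bars of $Y$ also pairwise do not overlap.
   Context: An adornment is a compact simply connected region $S\subset\mathbb{R}^2$ together with a segment $[x,y]$, $x\ne y$, with endpoints on the boundary of $S$ and $[x,y]\subseteq S$ (the base); its boundary consists of two arcs from $x$ to $y$ (the sides). It is slender if, for a point $p$ moving along either side from $x$ to $y$, $\|p-x\|$ is nondecreasing and $\|p-y\|$ is nonincreasing; it is symmetric if invariant under reflection in the line through $x,y$. A polygonal chain consists of vertices $v_0,\dots,v_n$ and bars $[v_{i-1},v_i]$ (for a closed chain also a bar $[v_n,v_0]$); a configuration assigns positions to the vertices preserving bar lengths. An adornment attached to a bar is carried to another configuration by the rigid motion taking the bar to its new position. Points of the chain in two configurations correspond via these rigid motions of the bars. Configuration $Y$ is an expansion of configuration $X$ if for any two points $p,q$ of the chain in $X$, the corresponding points $p',q'$ in $Y$ satisfy $\|p'-q'\|\ge\|p-q\|$. Two adornments (on different bars) overlap if some point of one lies in the interior of the other; touching along boundaries is allowed. *)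

theory Defs
  imports "HOL-Analysis.Analysis"
begin

text \<open>The plane R^2 is modelled by the type complex.\<close>

definition adornment_sides :: "complex set \<Rightarrow> complex \<Rightarrow> complex \<Rightarrow> (real \<Rightarrow> complex) \<Rightarrow> (real \<Rightarrow> complex) \<Rightarrow> bool" where
  "adornment_sides S x y g1 g2 \<longleftrightarrow>
     arc g1 \<and> arc g2 \<and> pathstart g1 = x \<and> pathfinish g1 = y \<and>
     pathstart g2 = x \<and> pathfinish g2 = y \<and>
     frontier S = path_image g1 \<union> path_image g2"

definition adornment :: "complex set \<Rightarrow> complex \<Rightarrow> complex \<Rightarrow> bool" where
  "adornment S x y \<longleftrightarrow>
     compact S \<and> simply_connected S \<and> x \<noteq> y \<and>
     x \<in> frontier S \<and> y \<in> frontier S \<and> closed_segment x y \<subseteq> S \<and>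
     (\<exists>g1 g2. adornment_sides S x y g1 g2)"

definition slender_side :: "(real \<Rightarrow> complex) \<Rightarrow> complex \<Rightarrow> complex \<Rightarrow> bool" where
  "slender_side g x y \<longleftrightarrow>
     (\<forall>s t. 0 \<le> s \<and> s \<le> t \<and> t \<le> 1 \<longrightarrow>
        norm (g s - x) \<le> norm (g t - x) \<and> norm (g t - y) \<le> norm (g s - y))"

definition slender_adornment :: "complex set \<Rightarrow> complex \<Rightarrow> complex \<Rightarrow> bool" where
  "slender_adornment S x y \<longleftrightarrow> adornment S x y \<and>
     (\<forall>g1 g2. adornment_sides S x y g1 g2 \<longrightarrow> slender_side g1 x y \<and> slender_side g2 x y)"

definition reflect_line :: "complex \<Rightarrow> complex \<Rightarrow> complex \<Rightarrow> complex" where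
  "reflect_line x y z = x + (y - x) * cnj ((z - x) / (y - x))"

definition symmetric_adornment :: "complex set \<Rightarrow> complex \<Rightarrow> complex \<Rightarrow> bool" where
  "symmetric_adornment S x y \<longleftrightarrow> adornment S x y \<and> reflect_line x y ` S = S"

text \<open>Orientation preserving rigid motion taking the bar [a,b] to [a',b']
  (for |a'-b'| = |a-b| and a \<noteq> b).\<close>
definition bar_motion :: "complex \<Rightarrow> complex \<Rightarrow> complex \<Rightarrow> complex \<Rightarrow> complex \<Rightarrow> complex" where
  "bar_motion a b a' b' z = a' + (b' - a') / (b - a) * (z - a)"

text \<open>Chain with vertices v_0..v_n; bar k joins v_k and v_(k+1 mod n+1).
  Open chain: bars 0..n-1; closed chain: bars 0..n (bar n joins v_n and v_0).\<close>
definition chain_bars :: "bool \<Rightarrow> nat \<Rightarrow> nat set" where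
  "chain_bars is_closed n = (if is_closed then {..n} else {..<n})"

definition chain_next :: "nat \<Rightarrow> nat \<Rightarrow> nat" where
  "chain_next n k = Suc k mod Suc n"

definition carry :: "nat \<Rightarrow> (nat \<Rightarrow> complex) \<Rightarrow> (nat \<Rightarrow> complex) \<Rightarrow> nat \<Rightarrow> complex \<Rightarrow> complex" where
  "carry n X Y k = bar_motion (X k) (X (chain_next n k)) (Y k) (Y (chain_next n k))"

definition overlap :: "complex set \<Rightarrow> complex set \<Rightarrow> bool" where
  "overlap A B \<longleftrightarrow> A \<inter> interior B \<noteq> {} \<or> B \<inter> interior A \<noteq> {}"

end

theory Submission
  imports Defs "HOL-Complex_Analysis.Complex_Analysis"
begin

(* Call cball x (dist x w) \<inter> cball y (dist y w) the lens of w over the base [x, y].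
   A symmetric slender adornment S contains the lens of each of its points w.  Pushing w away from
   both x and y, it reaches the frontier at a point f of a side, whose lens is larger.  If the lens
   of f contained a point z outside S, the side, folded into one half-plane and closed up by its
   mirror image, would be a loop in S that misses the lens of z; it winds once around the foot of
   z on the base line, but not around z, although the segment joining the two lies in the lens.

   If a point p of the carried adornment of bar i lies in the interior of the carried adornment of
   bar j, push p slightly away from both ends of bar j inside that interior.  The expansion does not
   shrink the distances between the four endpoints of bars i and j, so Kirszbraun's theorem gives a
   point q at most as far from each endpoint in X as p is from the corresponding endpoint in Y.
   Then q lies in the lens of a point of A i and in the open lens of a point of A j, that is, in A i
   and in the interior of A j. *)

section \<open>Kirszbraun's theorem for finitely many points\<close>

lemma weighted_pairwise_sq_dist_eq:
  fixes V :: "'i \<Rightarrow> 'a::real_inner" and u :: "'i \<Rightarrow> real"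
  assumes "finite A" and "sum u A = 1"
  shows "(\<Sum>k\<in>A. \<Sum>l\<in>A. u k * u l * (dist (V k) (V l))\<^sup>2)
       = 2 * (\<Sum>k\<in>A. u k * (dist (V k) p)\<^sup>2) - 2 * (dist (\<Sum>k\<in>A. u k *\<^sub>R V k) p)\<^sup>2"
proof -
  define c where "c = (\<Sum>k\<in>A. u k *\<^sub>R V k)"
  have sq: "(dist x y)\<^sup>2 = inner x x - 2 * inner x y + inner y y" for x y :: 'a
    by (simp add: dist_norm power2_norm_eq_inner inner_diff inner_commute)
  have cc: "inner c c = (\<Sum>k\<in>A. \<Sum>l\<in>A. u k * u l * inner (V k) (V l))"
    unfolding c_def
    by (simp add: inner_sum_left inner_sum_right sum_distrib_left mult.assoc inner_commute mult.left_commute)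
  have cp: "inner c p = (\<Sum>k\<in>A. u k * inner (V k) p)"
    unfolding c_def by (simp add: inner_sum_left)
  have "(\<Sum>k\<in>A. \<Sum>l\<in>A. u k * u l * (dist (V k) (V l))\<^sup>2)
      = (\<Sum>k\<in>A. \<Sum>l\<in>A. u k * u l * inner (V k) (V k))
        - 2 * (\<Sum>k\<in>A. \<Sum>l\<in>A. u k * u l * inner (V k) (V l))
        + (\<Sum>k\<in>A. \<Sum>l\<in>A. u k * u l * inner (V l) (V l))"
    by (simp add: sq algebra_simps sum.distrib sum_subtractf sum_distrib_left)
  also have "(\<Sum>k\<in>A. \<Sum>l\<in>A. u k * u l * inner (V k) (V k)) = (\<Sum>k\<in>A. u k * inner (V k) (V k))"
    by (simp add: sum_distrib_left[symmetric] sum_distrib_right[symmetric] assms(2)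
        mult.commute mult.left_commute)
  also have "(\<Sum>k\<in>A. \<Sum>l\<in>A. u k * u l * inner (V l) (V l)) = (\<Sum>k\<in>A. u k * inner (V k) (V k))"
    by (simp add: sum_distrib_left[symmetric] sum_distrib_right[symmetric] assms(2) mult.assoc)
  finally have lhs: "(\<Sum>k\<in>A. \<Sum>l\<in>A. u k * u l * (dist (V k) (V l))\<^sup>2)
      = 2 * (\<Sum>k\<in>A. u k * inner (V k) (V k)) - 2 * inner c c"
    using cc by simp
  have "(\<Sum>k\<in>A. u k * (dist (V k) p)\<^sup>2)
      = (\<Sum>k\<in>A. u k * inner (V k) (V k)) - 2 * (\<Sum>k\<in>A. u k * inner (V k) p) + (\<Sum>k\<in>A. u k) * inner p p"
    by (simp add: sq algebra_simps sum.distrib sum_subtractf sum_distrib_left sum_distrib_right)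
  then have "(\<Sum>k\<in>A. u k * (dist (V k) p)\<^sup>2) = (\<Sum>k\<in>A. u k * inner (V k) (V k)) - 2 * inner c p + inner p p"
    using assms(2) cp by simp
  with lhs sq[of c p] show ?thesis
    unfolding c_def[symmetric] by linarith
qed

lemma convex_hull_finite_image:
  fixes P :: "'i \<Rightarrow> 'a::real_vector"
  assumes "finite A" and "q \<in> convex hull (P ` A)"
  obtains u where "\<forall>k\<in>A. 0 \<le> u k" "sum u A = 1" "(\<Sum>k\<in>A. u k *\<^sub>R P k) = q"
proof -
  obtain v where v: "\<forall>x\<in>P ` A. 0 \<le> v x" "sum v (P ` A) = 1" "(\<Sum>x\<in>P ` A. v x *\<^sub>R x) = q"
    using assms by (auto simp: convex_hull_finite)
  define m where "m k = real (card {l\<in>A. P l = P k})" for k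
  define u where "u k = v (P k) / m k" for k
  have m: "m k > 0" if "k \<in> A" for k
    using assms(1) that by (auto simp: m_def card_gt_0_iff)
  have fibre: "(\<Sum>k\<in>{l\<in>A. P l = x}. u k *\<^sub>R f x) = v x *\<^sub>R f x" if "x \<in> P ` A" for x and f :: "'a \<Rightarrow> 'b::real_vector"
  proof -
    have "(\<Sum>k\<in>{l\<in>A. P l = x}. u k *\<^sub>R f x) = (\<Sum>k\<in>{l\<in>A. P l = x}. (v x / card {l\<in>A. P l = x}) *\<^sub>R f x)"
      by (intro sum.cong) (auto simp: u_def m_def)
    also have "\<dots> = v x *\<^sub>R f x"
      using that assms(1) by (auto simp: sum_constant_scaleR card_gt_0_iff)
    finally show ?thesis .
  qed
  have "(\<Sum>k\<in>A. u k *\<^sub>R f (P k)) = (\<Sum>x\<in>P ` A. v x *\<^sub>R f x)" for f :: "'a \<Rightarrow> 'b::real_vector"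
    by (subst sum.image_gen[OF assms(1)]) (auto simp: fibre intro!: sum.cong)
  from this[of "\<lambda>_. 1::real"] this[of id] v have "sum u A = 1" "(\<Sum>k\<in>A. u k *\<^sub>R P k) = q"
    by simp_all
  moreover have "\<forall>k\<in>A. 0 \<le> u k" using v(1) m by (simp add: u_def less_imp_le)
  ultimately show ?thesis using that by blast
qed

lemma excess_nonpos_if_convex_combination:
  fixes P Q :: "'i \<Rightarrow> 'a::real_inner"
  assumes "finite A" and u: "\<forall>k\<in>A. 0 \<le> u k" "sum u A = 1" "(\<Sum>k\<in>A. u k *\<^sub>R P k) = q"
    and eq: "\<forall>k\<in>A. (dist (P k) q)\<^sup>2 = (dist (Q k) p)\<^sup>2 + m"
    and le: "\<forall>k\<in>A. \<forall>l\<in>A. dist (P k) (P l) \<le> dist (Q k) (Q l)"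
  shows "m \<le> 0"
proof -
  let ?R = "\<Sum>k\<in>A. u k * (dist (Q k) p)\<^sup>2"
  have "(\<Sum>k\<in>A. u k * (dist (P k) q)\<^sup>2) = (\<Sum>k\<in>A. u k * (dist (Q k) p)\<^sup>2 + m * u k)"
    using eq by (intro sum.cong) (auto simp: algebra_simps)
  also have "\<dots> = ?R + m"
    by (simp add: sum.distrib u(2) flip: sum_distrib_left)
  finally have "(\<Sum>k\<in>A. \<Sum>l\<in>A. u k * u l * (dist (P k) (P l))\<^sup>2) = 2 * (?R + m)"
    using weighted_pairwise_sq_dist_eq[OF assms(1) u(2), of P q] u(3) by simp
  moreover have "(\<Sum>k\<in>A. \<Sum>l\<in>A. u k * u l * (dist (P k) (P l))\<^sup>2)
      \<le> (\<Sum>k\<in>A. \<Sum>l\<in>A. u k * u l * (dist (Q k) (Q l))\<^sup>2)"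
    using u(1) le by (intro sum_mono mult_left_mono power_mono) auto
  moreover have "(\<Sum>k\<in>A. \<Sum>l\<in>A. u k * u l * (dist (Q k) (Q l))\<^sup>2) \<le> 2 * ?R"
    using weighted_pairwise_sq_dist_eq[OF assms(1) u(2), of Q p] by simp
  ultimately have "2 * (?R + m) \<le> 2 * ?R"
    by linarith
  then show ?thesis
    by simp
qed

lemma dist_lt_towards_obtuse_point:
  fixes q c y :: "'a::real_inner"
  assumes "inner (q - c) (y - c) \<le> 0" and "c \<noteq> q" and "0 < t" "t < 2"
  shows "dist (q + t *\<^sub>R (c - q)) y < dist q y"
proof -
  let ?v = "c - q"
  have "q + t *\<^sub>R ?v - y = (q - y) + t *\<^sub>R ?v"
    by (simp add: algebra_simps)
  then have "(dist (q + t *\<^sub>R ?v) y)\<^sup>2 = (dist q y)\<^sup>2 + 2 * t * inner (q - y) ?v + t\<^sup>2 * inner ?v ?v"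
    unfolding dist_norm power2_norm_eq_inner
    by (simp add: inner_add_left inner_add_right inner_commute power2_eq_square algebra_simps)
  also have "inner (q - y) ?v = - inner ?v ?v + inner (q - c) (y - c)"
    by (simp add: inner_diff inner_commute algebra_simps)
  finally have "(dist (q + t *\<^sub>R ?v) y)\<^sup>2
      = (dist q y)\<^sup>2 + t * (t - 2) * inner ?v ?v + 2 * t * inner (q - c) (y - c)"
    by (simp add: algebra_simps power2_eq_square)
  also have "\<dots> \<le> (dist q y)\<^sup>2 + t * (t - 2) * inner ?v ?v"
    using assms(1,3) by (simp add: mult_nonneg_nonpos)
  also have "\<dots> < (dist q y)\<^sup>2"
    using assms(2-4) by (simp add: mult_pos_neg mult_neg_pos)
  finally show ?thesis
    by (simp add: power_less_imp_less_base)
qed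

lemma continuous_on_Max:
  fixes f :: "'i \<Rightarrow> 'a::topological_space \<Rightarrow> 'b::linorder_topology"
  assumes "finite I" "I \<noteq> {}" "\<And>k. k \<in> I \<Longrightarrow> continuous_on C (f k)"
  shows "continuous_on C (\<lambda>x. Max ((\<lambda>k. f k x) ` I))"
  using assms
proof (induction I rule: finite_ne_induct)
  case (insert k I)
  then show ?case
    by (simp add: continuous_on_max)
qed simp

lemma eventually_max_excess_decreases:
  fixes P :: "'i \<Rightarrow> 'a::euclidean_space" and r :: "'i \<Rightarrow> real" and I :: "'i set"
  defines "\<Phi> \<equiv> \<lambda>y. Max ((\<lambda>k. (dist (P k) y)\<^sup>2 - r k) ` I)"
  assumes I: "finite I" "I \<noteq> {}"
    and D: "D = convex hull (P ` {k\<in>I. (dist (P k) q)\<^sup>2 - r k = \<Phi> q})"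
    and "q \<notin> D" and c: "c \<in> D" "\<forall>z\<in>D. dist q c \<le> dist q z"
  shows "\<forall>\<^sub>F t in at_right 0. \<Phi> (q + t *\<^sub>R (c - q)) < \<Phi> q"
proof -
  define y where "y t = q + t *\<^sub>R (c - q)" for t
  have "c \<noteq> q"
    using c(1) \<open>q \<notin> D\<close> by auto
  have "\<forall>\<^sub>F t in at_right 0. (dist (P k) (y t))\<^sup>2 - r k < \<Phi> q" if k: "k \<in> I" for k
  proof (cases "(dist (P k) q)\<^sup>2 - r k = \<Phi> q")
    case True
    then have "P k \<in> D"
      using k by (auto simp: D hull_inc)
    then have "inner (q - c) (P k - c) \<le> 0"
      using c by (intro any_closest_point_dot) (auto simp: D compact_imp_closed
          compact_convex_hull finite_imp_compact I(1))
    then have "dist (P k) (y t) < dist (P k) q" if "t \<in> {0<..<1}" for t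
      using dist_lt_towards_obtuse_point[OF _ \<open>c \<noteq> q\<close>, where t = t and y = "P k"] that
      by (simp add: y_def dist_commute)
    then have "(dist (P k) (y t))\<^sup>2 - r k < \<Phi> q" if "t \<in> {0<..<1}" for t
      using that by (simp add: power_strict_mono flip: True)
    moreover have "\<forall>\<^sub>F t in at_right 0. t \<in> {0<..<1::real}"
      by (rule eventually_at_right_real) simp
    ultimately show ?thesis
      by (simp add: eventually_mono)
  next
    case False
    have "(dist (P k) q)\<^sup>2 - r k \<le> \<Phi> q"
      unfolding \<Phi>_def using I k by (intro Max_ge) auto
    with False have less: "(dist (P k) q)\<^sup>2 - r k < \<Phi> q"
      by simp
    have "isCont (\<lambda>t. (dist (P k) (y t))\<^sup>2 - r k) 0"
      unfolding y_def by (intro continuous_intros)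
    then have "((\<lambda>t. (dist (P k) (y t))\<^sup>2 - r k) \<longlongrightarrow> (dist (P k) q)\<^sup>2 - r k) (at_right 0)"
      unfolding isCont_def y_def by (simp add: filterlim_at_split)
    from order_tendstoD(2)[OF this less] show ?thesis .
  qed
  then have "\<forall>\<^sub>F t in at_right 0. \<forall>k\<in>I. (dist (P k) (y t))\<^sup>2 - r k < \<Phi> q"
    by (intro eventually_ball_finite[OF I(1)]) blast
  then show ?thesis
  proof (rule eventually_mono)
    fix t assume "\<forall>k\<in>I. (dist (P k) (y t))\<^sup>2 - r k < \<Phi> q"
    then show "\<Phi> (q + t *\<^sub>R (c - q)) < \<Phi> q"
      using I by (simp add: \<Phi>_def y_def Max_less_iff)
  qed
qed

lemma max_excess_minimizer_in_active_hull:
  fixes P :: "'i \<Rightarrow> 'a::euclidean_space" and r :: "'i \<Rightarrow> real" and I :: "'i set"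
  defines "\<Phi> \<equiv> \<lambda>y. Max ((\<lambda>k. (dist (P k) y)\<^sup>2 - r k) ` I)"
  assumes I: "finite I" "I \<noteq> {}"
    and q: "q \<in> convex hull (P ` I)" and min: "\<And>y. y \<in> convex hull (P ` I) \<Longrightarrow> \<Phi> q \<le> \<Phi> y"
  shows "q \<in> convex hull (P ` {k\<in>I. (dist (P k) q)\<^sup>2 - r k = \<Phi> q})"
proof (rule ccontr)
  define A where "A = {k\<in>I. (dist (P k) q)\<^sup>2 - r k = \<Phi> q}"
  define D where "D = convex hull (P ` A)"
  assume "q \<notin> convex hull (P ` {k\<in>I. (dist (P k) q)\<^sup>2 - r k = \<Phi> q})"
  then have "q \<notin> D"
    by (simp add: D_def A_def)
  have "\<Phi> q \<in> (\<lambda>k. (dist (P k) q)\<^sup>2 - r k) ` I"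
    unfolding \<Phi>_def using I by (intro Max_in) auto
  then have "D \<noteq> {}" "closed D"
    using I by (auto simp: D_def A_def compact_convex_hull compact_imp_closed finite_imp_compact)
  define c where "c = closest_point D q"
  have c: "c \<in> D" "\<forall>z\<in>D. dist q c \<le> dist q z"
    using \<open>D \<noteq> {}\<close> \<open>closed D\<close> by (simp_all add: c_def closest_point_in_set closest_point_le)
  have "\<forall>\<^sub>F t in at_right 0. \<Phi> (q + t *\<^sub>R (c - q)) < \<Phi> q \<and> t \<in> {0<..<1}"
    using eventually_max_excess_decreases[OF I _ \<open>q \<notin> D\<close> c] eventually_at_right_real[of 0 1]
    unfolding \<Phi>_def D_def A_def by (intro eventually_conj) auto
  then obtain t where t: "\<Phi> (q + t *\<^sub>R (c - q)) < \<Phi> q" "t \<in> {0<..<1}"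
    using eventually_happens'[OF trivial_limit_at_right_real] by blast
  have "D \<subseteq> convex hull (P ` I)"
    unfolding D_def A_def by (intro hull_mono image_mono) auto
  with c(1) have "c \<in> convex hull (P ` I)" by blast
  then have "(1 - t) *\<^sub>R q + t *\<^sub>R c \<in> convex hull (P ` I)"
    using q t(2) by (simp add: convexD[OF convex_convex_hull])
  then have "\<Phi> q \<le> \<Phi> (q + t *\<^sub>R (c - q))"
    using min by (simp add: algebra_simps)
  with t(1) show False
    by linarith
qed

text \<open>Valentine's proof: a point q minimising the largest excess (dist x q)^2 - (dist x' p)^2
  lies in the convex hull of the points x where this maximum is attained, and there the variance
  identity forces the excess to be nonpositive.\<close>

lemma kirszbraun_finite:
  fixes K :: "('a::euclidean_space \<times> 'a) set"
  assumes "finite K" and le: "\<And>x x' y y'. (x, x') \<in> K \<Longrightarrow> (y, y') \<in> K \<Longrightarrow> dist x y \<le> dist x' y'"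
  obtains q where "\<And>x x'. (x, x') \<in> K \<Longrightarrow> dist x q \<le> dist x' p"
proof (cases "K = {}")
  case False
  define F where "F y = Max ((\<lambda>k. (dist (fst k) y)\<^sup>2 - (dist (snd k) p)\<^sup>2) ` K)" for y
  have C: "compact (convex hull (fst ` K))" "convex hull (fst ` K) \<noteq> {}"
    using assms(1) False by (auto simp: compact_convex_hull finite_imp_compact)
  have "continuous_on (convex hull (fst ` K)) F"
    unfolding F_def using assms(1) False by (intro continuous_on_Max continuous_intros) auto
  then obtain q where q: "q \<in> convex hull (fst ` K)"
    and min: "\<And>y. y \<in> convex hull (fst ` K) \<Longrightarrow> F q \<le> F y"
    using continuous_attains_inf[OF C] by blast
  define A where "A = {k\<in>K. (dist (fst k) q)\<^sup>2 - (dist (snd k) p)\<^sup>2 = F q}"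
  have "q \<in> convex hull (fst ` A)"
    unfolding A_def F_def
    by (rule max_excess_minimizer_in_active_hull[OF assms(1) False q]) (use min in \<open>simp add: F_def\<close>)
  moreover have "finite A"
    using assms(1) by (simp add: A_def)
  ultimately obtain u where u: "\<forall>k\<in>A. 0 \<le> u k" "sum u A = 1" "(\<Sum>k\<in>A. u k *\<^sub>R fst k) = q"
    using convex_hull_finite_image by blast
  have "F q \<le> 0"
  proof (rule excess_nonpos_if_convex_combination[where P = fst and Q = snd])
    show "\<forall>k\<in>A. (dist (fst k) q)\<^sup>2 = (dist (snd k) p)\<^sup>2 + F q"
      by (simp add: A_def)
    show "\<forall>k\<in>A. \<forall>l\<in>A. dist (fst k) (fst l) \<le> dist (snd k) (snd l)"
    proof (intro ballI)
      fix k l assume "k \<in> A" "l \<in> A"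
      then show "dist (fst k) (fst l) \<le> dist (snd k) (snd l)"
        using le[of "fst k" "snd k" "fst l" "snd l"] by (simp add: A_def)
    qed
  qed fact+
  show ?thesis
  proof (rule that)
    fix x x' assume "(x, x') \<in> K"
    then have "(dist x q)\<^sup>2 - (dist x' p)\<^sup>2 \<in> (\<lambda>k. (dist (fst k) q)\<^sup>2 - (dist (snd k) p)\<^sup>2) ` K"
      by (rule rev_image_eqI) simp
    then have "(dist x q)\<^sup>2 - (dist x' p)\<^sup>2 \<le> F q"
      unfolding F_def using assms(1) by (intro Max_ge) simp_all
    with \<open>F q \<le> 0\<close> have "(dist x q)\<^sup>2 \<le> (dist x' p)\<^sup>2"
      by linarith
    then show "dist x q \<le> dist x' p"
      by (rule power2_le_imp_le) simp
  qed
qed (use that in blast)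

section \<open>Lenses in symmetric slender adornments\<close>

lemma eq_or_eq_cnj_if_same_dists_0_1:
  fixes u z :: complex
  assumes "norm u = norm z" and "norm (u - 1) = norm (z - 1)"
  shows "u = z \<or> u = cnj z"
proof -
  have 0: "(Re u)\<^sup>2 + (Im u)\<^sup>2 = (Re z)\<^sup>2 + (Im z)\<^sup>2"
    using assms(1) by (metis cmod_power2)
  have 1: "(Re u - 1)\<^sup>2 + (Im u)\<^sup>2 = (Re z - 1)\<^sup>2 + (Im z)\<^sup>2"
    using assms(2) cmod_power2[of "u - 1"] cmod_power2[of "z - 1"] by simp
  from 0 1 have "Re u = Re z"
    by (simp add: power2_eq_square algebra_simps)
  moreover from this 0 have "Im u = Im z \<or> Im u = - Im z"
    by (simp add: power2_eq_iff)
  ultimately show ?thesis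
    by (auto simp: complex_eq_iff)
qed

lemma closed_segment_Re_subset_lens:
  fixes z :: complex
  shows "closed_segment (complex_of_real (Re z)) z \<subseteq> {u. norm u \<le> norm z \<and> norm (u - 1) \<le> norm (z - 1)}"
proof
  fix u assume "u \<in> closed_segment (complex_of_real (Re z)) z"
  then obtain s :: real where s: "0 \<le> s" "s \<le> 1" "u = (1 - s) *\<^sub>R complex_of_real (Re z) + s *\<^sub>R z"
    unfolding closed_segment_def by blast
  then have u: "Re u = Re z" "Im u = s * Im z"
    unfolding s(3) by (simp_all add: algebra_simps)
  have "s\<^sup>2 \<le> 1"
    using s by (simp add: power_le_one)
  then have "s\<^sup>2 * (Im z)\<^sup>2 \<le> 1 * (Im z)\<^sup>2"
    by (rule mult_right_mono) simp
  then have "(Im u)\<^sup>2 \<le> (Im z)\<^sup>2"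
    by (simp add: u power_mult_distrib)
  then have "(norm u)\<^sup>2 \<le> (norm z)\<^sup>2" "(norm (u - 1))\<^sup>2 \<le> (norm (z - 1))\<^sup>2"
    by (simp_all add: cmod_power2 u)
  then show "u \<in> {u. norm u \<le> norm z \<and> norm (u - 1) \<le> norm (z - 1)}"
    using power2_le_imp_le[of "norm u" "norm z"] power2_le_imp_le[of "norm (u - 1)" "norm (z - 1)"]
    by simp
qed

lemma part_circlepath_join_cnj:
  fixes c r :: real
  shows "part_circlepath c r 0 pi +++ (cnj \<circ> part_circlepath c r pi 0) = circlepath c r"
proof
  fix t :: real
  show "(part_circlepath c r 0 pi +++ (cnj \<circ> part_circlepath c r pi 0)) t = circlepath c r t"
  proof (cases "t \<le> 1/2")
    case True
    then show ?thesis
      by (simp add: joinpaths_def part_circlepath_def circlepath linepath_def mult_ac)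
  next
    case False
    have "exp (- (\<i> * ((2 - 2 * t) * pi))) = exp (2 * pi * \<i> * t) * exp (- (2 * pi * \<i>))"
      by (simp add: algebra_simps flip: exp_add)
    then have "exp (- (\<i> * ((2 - 2 * t) * pi))) = exp (2 * pi * \<i> * t)"
      by (simp add: exp_minus)
    then show ?thesis
      using False
      by (simp add: joinpaths_def part_circlepath_def circlepath linepath_def exp_cnj
          algebra_simps)
  qed
qed

lemma starlike_upper_half_plane_minus_point:
  "starlike ({w. 0 \<le> Im w} - {complex_of_real a})"
  unfolding starlike_def
proof (intro bexI ballI subsetI)
  let ?H = "{w. 0 \<le> Im w} - {complex_of_real a}"
  show "complex_of_real a + \<i> \<in> ?H"
    by (simp add: complex_eq_iff)
  fix x u assume x: "x \<in> ?H" and "u \<in> closed_segment (complex_of_real a + \<i>) x"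
  then obtain s where s: "0 \<le> s" "s \<le> 1" "u = (1 - s) *\<^sub>R (complex_of_real a + \<i>) + s *\<^sub>R x"
    unfolding closed_segment_def by blast
  then have Im_u: "Im u = (1 - s) + s * Im x"
    by simp
  have "0 \<le> Im u"
    using s x by (simp add: Im_u)
  moreover have "u \<noteq> complex_of_real a"
  proof
    assume "u = complex_of_real a"
    moreover have "0 \<le> s * Im x"
      using s x by simp
    ultimately have "s = 1"
      using s Im_u by simp
    then show False
      using s x \<open>u = complex_of_real a\<close> by simp
  qed
  ultimately show "u \<in> ?H"
    by simp
qed

text \<open>In the closed upper half-plane punctured at a, the path U is homotopic to the upper half of
  the circle with diameter [0, 1].\<close>

lemma winding_number_join_cnj_eq_1:
  fixes U :: "real \<Rightarrow> complex" and a :: real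
  assumes U: "path U" "pathstart U = 0" "pathfinish U = 1"
    and U_image: "path_image U \<subseteq> {w. 0 \<le> Im w} - {complex_of_real a}"
    and a: "0 < a" "a < 1"
  shows "winding_number (reversepath U +++ (cnj \<circ> U)) a = 1"
proof -
  let ?H = "{w. 0 \<le> Im w} - {complex_of_real a}"
  define P where "P = part_circlepath (1/2) (1/2) pi 0"
  have "complex_of_real a - 1/2 = complex_of_real (a - 1/2)"
    by simp
  then have a_inside: "norm (complex_of_real a - 1/2) < 1/2"
    using a by (simp only: norm_of_real)
  have "path_image P \<subseteq> ?H"
  proof
    fix w assume "w \<in> path_image P"
    then obtain x where x: "x \<in> closed_segment pi 0" "w = 1/2 + 1/2 * cis x"
      by (auto simp: P_def path_image_part_circlepath')
    then have "0 \<le> x" "x \<le> pi"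
      using pi_gt_zero by (auto simp: closed_segment_eq_real_ivl split: if_splits)
    then have "0 \<le> Im w"
      using x by (simp add: sin_ge_zero)
    moreover have "norm (w - 1/2) = 1/2"
      using x by (simp add: norm_mult)
    ultimately show "w \<in> ?H"
      using a_inside by auto
  qed
  moreover have "simply_connected ?H"
    by (intro starlike_imp_simply_connected starlike_upper_half_plane_minus_point)
  ultimately have "homotopic_paths ?H U P"
    using U U_image by (auto simp: simply_connected_eq_homotopic_paths P_def)
  then have "homotopic_paths (- {complex_of_real a}) U P"
    by (rule homotopic_paths_subset) auto
  moreover have "homotopic_paths (- {complex_of_real a}) (cnj \<circ> U) (cnj \<circ> P)"
    using \<open>homotopic_paths ?H U P\<close>
    by (rule homotopic_paths_continuous_image) (auto intro: continuous_intros simp: complex_eq_iff)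
  ultimately have "homotopic_paths (- {complex_of_real a})
      (reversepath U +++ (cnj \<circ> U)) (reversepath P +++ (cnj \<circ> P))"
    using U by (intro homotopic_paths_join) (simp_all add: homotopic_paths_reversepath pathstart_compose)
  moreover have "reversepath P +++ (cnj \<circ> P) = circlepath (1/2) (1/2)"
    using part_circlepath_join_cnj[of "1/2" "1/2"] by (simp add: P_def)
  ultimately have "winding_number (reversepath U +++ (cnj \<circ> U)) a = winding_number (circlepath (1/2) (1/2)) a"
    by (metis winding_number_homotopic_paths)
  also have "\<dots> = 1"
    using a_inside by (intro winding_number_circlepath) (simp add: norm_minus_commute)
  finally show ?thesis .
qed

lemma norm_cnj_diff_one [simp]: "norm (cnj u - 1) = norm (u - 1)"
  by (metis complex_cnj_diff complex_cnj_one complex_mod_cnj)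

lemma slender_path_meets_lens_corner:
  fixes g :: "real \<Rightarrow> complex"
  assumes g: "path g" "slender_side g 0 1" and s: "s \<in> {0..1}" and t: "t \<in> {0..1}"
    and z_in: "norm z \<le> norm (g s)" "norm (z - 1) \<le> norm (g s - 1)"
    and g_in: "norm (g t) \<le> norm z" "norm (g t - 1) \<le> norm (z - 1)"
  obtains t' where "t' \<in> {0..1}" "g t' = z \<or> g t' = cnj z"
proof -
  have mono: "norm (g a) \<le> norm (g b)" "norm (g b - 1) \<le> norm (g a - 1)"
    if "0 \<le> a" "a \<le> b" "b \<le> 1" for a b
    using g(2) that unfolding slender_side_def by auto
  have "continuous_on {a..b} g" if "0 \<le> a" "b \<le> 1" for a b
    using g(1) that unfolding path_def by (elim continuous_on_subset) auto
  then have cont: "continuous_on {a..b} (\<lambda>t. norm (g t))" "continuous_on {a..b} (\<lambda>t. norm (g t - 1))"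
    if "0 \<le> a" "b \<le> 1" for a b
    using that by (auto intro!: continuous_intros)
  have "\<exists>t'\<in>{0..1}. norm (g t') = norm z \<and> norm (g t' - 1) = norm (z - 1)"
  proof (cases "t \<le> s")
    case True
    then obtain t' where t': "t \<le> t'" "t' \<le> s" "norm (g t') = norm z"
      using IVT'[of "\<lambda>t. norm (g t)" t "norm z" s] z_in g_in s t cont by auto
    moreover have "norm (g t' - 1) = norm (z - 1)"
      using mono(2)[of t t'] mono(2)[of t' s] s t t' z_in g_in by fastforce
    ultimately show ?thesis
      using s t by (intro bexI[of _ t']) auto
  next
    case False
    then obtain t' where t': "s \<le> t'" "t' \<le> t" "norm (g t' - 1) = norm (z - 1)"
      using IVT2'[of "\<lambda>t. norm (g t - 1)" t "norm (z - 1)" s] z_in g_in s t cont by auto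
    moreover have "norm (g t') = norm z"
      using mono(1)[of s t'] mono(1)[of t' t] s t t' z_in g_in by fastforce
    ultimately show ?thesis
      using s t by (intro bexI[of _ t']) auto
  qed
  then show ?thesis
    using eq_or_eq_cnj_if_same_dists_0_1 that by blast
qed

lemma path_reflect_into_upper_half_plane:
  fixes g :: "real \<Rightarrow> complex"
  assumes "path g"
  obtains U where "path U" "\<And>t. U t = g t \<or> U t = cnj (g t)" "\<And>t. 0 \<le> Im (U t)"
proof
  define U where "U t = complex_of_real (Re (g t)) + \<i> * complex_of_real \<bar>Im (g t)\<bar>" for t
  show "path U"
    using assms unfolding path_def U_def by (intro continuous_intros)
  show "U t = g t \<or> U t = cnj (g t)" "0 \<le> Im (U t)" for t
    by (auto simp: U_def complex_eq_iff abs_if)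
qed

lemma mem_if_upper_path_avoids_lens:
  fixes S :: "complex set" and U :: "real \<Rightarrow> complex"
  assumes S: "simply_connected S" "cnj ` S \<subseteq> S"
    and U: "path U" "pathstart U = 0" "pathfinish U = 1" "path_image U \<subseteq> S \<inter> {w. 0 \<le> Im w}"
    and avoid: "path_image U \<inter> {u. norm u \<le> norm z \<and> norm (u - 1) \<le> norm (z - 1)} = {}"
    and z: "0 < Re z" "Re z < 1"
  shows "z \<in> S"
proof (rule ccontr)
  assume "z \<notin> S"
  define L where "L = {u::complex. norm u \<le> norm z \<and> norm (u - 1) \<le> norm (z - 1)}"
  have segment_L: "closed_segment (complex_of_real (Re z)) z \<subseteq> L"
    unfolding L_def by (rule closed_segment_Re_subset_lens)
  define \<gamma> where "\<gamma> = reversepath U +++ (cnj \<circ> U)"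
  have \<gamma>: "path \<gamma>" "pathfinish \<gamma> = pathstart \<gamma>"
    using U(1-3) by (auto simp: \<gamma>_def pathstart_compose pathfinish_compose)
  have \<gamma>_image: "path_image \<gamma> = path_image U \<union> cnj ` path_image U"
    using U(2,3) by (simp add: \<gamma>_def path_image_join path_image_compose pathstart_compose)
  have "complex_of_real (Re z) \<in> L"
    using segment_L by auto
  then have "path_image U \<subseteq> {w. 0 \<le> Im w} - {complex_of_real (Re z)}"
    using U(4) avoid unfolding L_def by blast
  then have "winding_number \<gamma> (Re z) = 1"
    unfolding \<gamma>_def by (rule winding_number_join_cnj_eq_1[OF U(1-3) _ z])
  moreover have "path_image \<gamma> \<subseteq> S"
    using U(4) S(2) unfolding \<gamma>_image by auto
  then have "winding_number \<gamma> z = 0"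
    using simply_connected_imp_winding_number_zero[OF S(1) \<gamma>(1) _ \<gamma>(2) \<open>z \<notin> S\<close>] by blast
  moreover have "path_image \<gamma> \<inter> L = {}"
    using avoid unfolding \<gamma>_image L_def by auto
  then have "winding_number \<gamma> constant_on closed_segment (complex_of_real (Re z)) z"
    using segment_L by (intro winding_number_constant[OF \<gamma>]) auto
  ultimately show False
    by (metis constant_on_def ends_in_segment zero_neq_one)
qed

lemma mem_if_in_lens_of_slender_path_0_1:
  fixes S :: "complex set" and g :: "real \<Rightarrow> complex"
  assumes S: "simply_connected S" "cnj ` S \<subseteq> S"
    and g: "path g" "pathstart g = 0" "pathfinish g = 1" "path_image g \<subseteq> S" "slender_side g 0 1"
    and t0: "t0 \<in> {0..1}" and z: "norm z \<le> norm (g t0)" "norm (z - 1) \<le> norm (g t0 - 1)"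
  shows "z \<in> S"
proof (rule ccontr)
  assume "z \<notin> S"
  then have "cnj z \<notin> S"
    using S(2) by (metis complex_cnj_cnj image_subset_iff)
  have g_outside: "\<not> (norm (g t) \<le> norm z \<and> norm (g t - 1) \<le> norm (z - 1))" if t: "t \<in> {0..1}" for t
  proof
    assume "norm (g t) \<le> norm z \<and> norm (g t - 1) \<le> norm (z - 1)"
    then obtain t' where t': "t' \<in> {0..1}" "g t' = z \<or> g t' = cnj z"
      using slender_path_meets_lens_corner[OF g(1,5) t0 t z] by blast
    have "g t' \<in> S"
      using g(4) t'(1) by (auto simp: path_image_def)
    with t'(2) \<open>z \<notin> S\<close> \<open>cnj z \<notin> S\<close> show False
      by auto
  qed
  have "norm (z - 1) < 1" "norm z < 1"
    using g_outside[of 0] g_outside[of 1] g(2,3) by (auto simp: pathstart_def pathfinish_def)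
  then have "0 < Re z" "Re z < 1"
    using abs_Re_le_cmod[of z] abs_Re_le_cmod[of "z - 1"] by auto
  obtain U where U: "path U" "\<And>t. U t = g t \<or> U t = cnj (g t)" "\<And>t. 0 \<le> Im (U t)"
    using path_reflect_into_upper_half_plane[OF g(1)] by blast
  have "pathstart U = 0" "pathfinish U = 1"
    using g(2,3) U(2)[of 0] U(2)[of 1] by (auto simp: pathstart_def pathfinish_def)
  moreover have "U t \<in> S \<inter> {w. 0 \<le> Im w}" "\<not> (norm (U t) \<le> norm z \<and> norm (U t - 1) \<le> norm (z - 1))"
    if t: "t \<in> {0..1}" for t
  proof -
    have "g t \<in> S"
      using g(4) t by (auto simp: path_image_def)
    then show "U t \<in> S \<inter> {w. 0 \<le> Im w}"
      using U(2)[of t] U(3)[of t] S(2) by auto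
    show "\<not> (norm (U t) \<le> norm z \<and> norm (U t - 1) \<le> norm (z - 1))"
      using U(2)[of t] g_outside[OF t] by auto
  qed
  ultimately have "z \<in> S"
    using \<open>0 < Re z\<close> \<open>Re z < 1\<close>
    by (intro mem_if_upper_path_avoids_lens[OF S U(1)]) (auto simp: path_image_def)
  with \<open>z \<notin> S\<close> show False ..
qed

lemma homeomorphic_complex_affine_image:
  fixes S :: "complex set"
  assumes "c \<noteq> 0"
  shows "S homeomorphic (\<lambda>z. (z - b) / c) ` S"
  unfolding homeomorphic_minimal
  by (rule exI[of _ "\<lambda>z. (z - b) / c"], rule exI[of _ "\<lambda>w. b + c * w"])
    (use assms in \<open>auto intro!: continuous_intros\<close>)

lemma lens_subset_if_slender_path:
  fixes S :: "complex set" and g :: "real \<Rightarrow> complex"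
  assumes S: "simply_connected S" "reflect_line x y ` S \<subseteq> S" and "x \<noteq> y"
    and g: "path g" "pathstart g = x" "pathfinish g = y" "path_image g \<subseteq> S" "slender_side g x y"
    and t: "t \<in> {0..1}"
  shows "cball x (dist x (g t)) \<inter> cball y (dist y (g t)) \<subseteq> S"
proof
  fix z assume z: "z \<in> cball x (dist x (g t)) \<inter> cball y (dist y (g t))"
  define h where "h u = (u - x) / (y - x)" for u
  have "dist y x > 0"
    using \<open>x \<noteq> y\<close> by simp
  have norm_h: "norm (h u) = dist u x / dist y x" "norm (h u - 1) = dist u y / dist y x" for u
  proof -
    have "h u - 1 = (u - y) / (y - x)"
      using \<open>x \<noteq> y\<close> by (simp add: h_def field_simps)
    then show "norm (h u) = dist u x / dist y x" "norm (h u - 1) = dist u y / dist y x"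
      by (simp_all add: h_def norm_divide dist_norm)
  qed
  have "simply_connected (h ` S)"
    using homeomorphic_simply_connected[OF homeomorphic_complex_affine_image S(1)] \<open>x \<noteq> y\<close>
    by (simp add: h_def[abs_def])
  moreover have "cnj ` h ` S \<subseteq> h ` S"
  proof -
    have "cnj (h s) = h (reflect_line x y s)" for s
      using \<open>x \<noteq> y\<close> by (simp add: h_def reflect_line_def)
    then show ?thesis
      using S(2) by (auto simp: image_image)
  qed
  moreover have "path (h \<circ> g)"
    using g(1) \<open>x \<noteq> y\<close> unfolding h_def[abs_def] by (intro path_continuous_image continuous_intros) auto
  moreover have "pathstart (h \<circ> g) = 0" "pathfinish (h \<circ> g) = 1"
    using g(2,3) \<open>x \<noteq> y\<close> by (simp_all add: pathstart_compose pathfinish_compose h_def)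
  moreover have "path_image (h \<circ> g) \<subseteq> h ` S"
    using g(4) by (simp add: path_image_compose image_mono)
  moreover have "slender_side (h \<circ> g) 0 1"
    using g(5) \<open>dist y x > 0\<close>
    by (auto simp: slender_side_def norm_h dist_norm divide_right_mono)
  moreover have "norm (h z) \<le> norm ((h \<circ> g) t)" "norm (h z - 1) \<le> norm ((h \<circ> g) t - 1)"
    using z \<open>dist y x > 0\<close> by (simp_all add: norm_h divide_right_mono dist_commute)
  ultimately have "h z \<in> h ` S"
    by (intro mem_if_in_lens_of_slender_path_0_1[OF _ _ _ _ _ _ _ t])
  moreover have "inj h"
    using \<open>x \<noteq> y\<close> by (auto simp: inj_def h_def)
  ultimately show "z \<in> S"
    by (simp add: inj_image_mem_iff)
qed

lemma ray_meets_frontier: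
  fixes S :: "'a::euclidean_space set"
  assumes "bounded S" "w \<in> S" "v \<noteq> 0"
  obtains s where "0 \<le> s" "w + s *\<^sub>R v \<in> frontier S"
proof (cases "w \<in> frontier S")
  case True
  with that show ?thesis by force
next
  case False
  with assms(2) have "w \<in> interior S"
    by (auto simp: frontier_def dest: closure_subset[THEN subsetD])
  with assms(1,3) show ?thesis
    by (metis ray_to_frontier less_eq_real_def that)
qed

lemma direction_away_from_two_points:
  fixes x y w :: complex
  assumes "x \<noteq> y"
  obtains v where "v \<noteq> 0" "\<And>s. 0 < s \<Longrightarrow> dist x w < dist x (w + s *\<^sub>R v) \<and> dist y w < dist y (w + s *\<^sub>R v)"
proof -
  define n where "n = \<i> * (y - x)"
  define v where "v = (if 0 \<le> inner (w - x) n then n else - n)"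
  have "v \<noteq> 0"
    using assms by (simp add: v_def n_def)
  have "inner (y - x) n = 0"
    by (simp add: n_def inner_complex_def algebra_simps)
  then have inner_v: "inner (w - y) v = inner (w - x) v" "0 \<le> inner (w - x) v"
    by (auto simp: v_def inner_diff_left)
  have "(dist u (w + s *\<^sub>R v))\<^sup>2 = (dist u w)\<^sup>2 + 2 * s * inner (w - u) v + s\<^sup>2 * inner v v" for u and s :: real
  proof -
    have "w + s *\<^sub>R v - u = (w - u) + s *\<^sub>R v"
      by (simp add: algebra_simps)
    then show ?thesis
      unfolding dist_norm norm_minus_commute[of u] power2_norm_eq_inner
      by (simp add: inner_add_left inner_add_right inner_commute power2_eq_square algebra_simps)
  qed
  moreover have "0 < s\<^sup>2 * inner v v" if "0 < s" for s :: real
    using that \<open>v \<noteq> 0\<close> by simp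
  ultimately have "(dist x w)\<^sup>2 < (dist x (w + s *\<^sub>R v))\<^sup>2 \<and> (dist y w)\<^sup>2 < (dist y (w + s *\<^sub>R v))\<^sup>2"
    if "0 < s" for s :: real
    using that inner_v by (smt (verit) mult_nonneg_nonneg)
  then show ?thesis
    using that[OF \<open>v \<noteq> 0\<close>] by (meson power_less_imp_less_base zero_le_dist)
qed

lemma lens_subset_symmetric_slender_adornment:
  assumes "slender_adornment S x y" "symmetric_adornment S x y" "w \<in> S"
  shows "cball x (dist x w) \<inter> cball y (dist y w) \<subseteq> S"
proof -
  have ad: "adornment S x y" and sym: "reflect_line x y ` S = S"
    using assms(1,2) by (simp_all add: slender_adornment_def symmetric_adornment_def)
  then have S: "compact S" "simply_connected S" "x \<noteq> y"
    by (simp_all add: adornment_def)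
  obtain g1 g2 where sides: "adornment_sides S x y g1 g2"
    using ad by (auto simp: adornment_def)
  obtain v where "v \<noteq> 0" and away: "\<And>s. 0 < s \<Longrightarrow> dist x w < dist x (w + s *\<^sub>R v) \<and> dist y w < dist y (w + s *\<^sub>R v)"
    using direction_away_from_two_points[OF S(3)] by blast
  obtain s where "0 \<le> s" and f: "w + s *\<^sub>R v \<in> frontier S"
    using ray_meets_frontier[OF compact_imp_bounded[OF S(1)] assms(3) \<open>v \<noteq> 0\<close>] by blast
  have far: "dist x w \<le> dist x (w + s *\<^sub>R v)" "dist y w \<le> dist y (w + s *\<^sub>R v)"
    using away[of s] \<open>0 \<le> s\<close> by (cases "s = 0"; force)+
  have "frontier S \<subseteq> S"
    using S(1) by (simp add: compact_imp_closed frontier_subset_closed)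
  have "w + s *\<^sub>R v \<in> path_image g1 \<union> path_image g2"
    using f sides by (simp add: adornment_sides_def)
  then obtain g t where g: "g = g1 \<or> g = g2" and t: "t \<in> {0..1}" and "g t = w + s *\<^sub>R v"
    by (metis UnE imageE path_image_def)
  moreover have "cball x (dist x (g t)) \<inter> cball y (dist y (g t)) \<subseteq> S"
  proof (rule lens_subset_if_slender_path[OF S(2) _ S(3) _ _ _ _ _ t])
    show "path g" "pathstart g = x" "pathfinish g = y" "path_image g \<subseteq> S"
      using g sides \<open>frontier S \<subseteq> S\<close> by (auto simp: adornment_sides_def arc_imp_path)
    show "slender_side g x y"
      using g sides assms(1) by (auto simp: slender_adornment_def)
  qed (use sym in simp)
  ultimately show ?thesis
    using far by fastforce
qed

section \<open>Carried adornments\<close>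

lemma bar_motion_start: "bar_motion a b a' b' a = a'"
  by (simp add: bar_motion_def)

lemma bar_motion_finish: "a \<noteq> b \<Longrightarrow> bar_motion a b a' b' b = b'"
  by (simp add: bar_motion_def)

lemma dist_bar_motion:
  assumes "a \<noteq> b" and "dist a' b' = dist a b"
  shows "dist (bar_motion a b a' b' u) (bar_motion a b a' b' v) = dist u v"
proof -
  have unit: "norm ((b' - a') / (b - a)) = 1"
    using assms by (simp add: norm_divide dist_norm norm_minus_commute)
  have "a' + r * (u - a) - (a' + r * (v - a)) = r * (u - v)" for r :: complex
    by (simp add: algebra_simps)
  then have "bar_motion a b a' b' u - bar_motion a b a' b' v = (b' - a') / (b - a) * (u - v)"
    unfolding bar_motion_def by blast
  then show ?thesis
    unfolding dist_norm by (simp only: norm_mult unit mult_1)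
qed

lemma carried_adornment_disjoint_interior:
  fixes S T :: "complex set" and a b c d a' b' c' d' :: complex
  defines "M \<equiv> bar_motion a b a' b'" and "N \<equiv> bar_motion c d c' d'"
  assumes S: "slender_adornment S a b" "symmetric_adornment S a b"
    and T: "slender_adornment T c d" "symmetric_adornment T c d"
    and bars: "dist a' b' = dist a b" "dist c' d' = dist c d"
    and expansion: "\<And>p q. p \<in> {a, b} \<Longrightarrow> q \<in> {c, d} \<Longrightarrow> dist p q \<le> dist (M p) (N q)"
    and disjoint: "S \<inter> interior T = {}"
  shows "M ` S \<inter> interior (N ` T) = {}"
proof (rule equals0I)
  fix p assume "p \<in> M ` S \<inter> interior (N ` T)"
  then obtain w e where w: "w \<in> S" "p = M w" and "0 < e" and ball: "ball p e \<subseteq> N ` T"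
    by (auto simp: mem_interior)
  have "a \<noteq> b" "c \<noteq> d" "c' \<noteq> d'"
    using S(1) T(1) bars(2) by (auto simp: slender_adornment_def adornment_def)
  obtain v where "v \<noteq> 0" and away: "\<And>s. 0 < s \<Longrightarrow> dist c' p < dist c' (p + s *\<^sub>R v) \<and> dist d' p < dist d' (p + s *\<^sub>R v)"
    using direction_away_from_two_points[OF \<open>c' \<noteq> d'\<close>] by blast
  define s where "s = e / (2 * norm v)"
  have "0 < s" "p + s *\<^sub>R v \<in> ball p e"
    using \<open>0 < e\<close> \<open>v \<noteq> 0\<close> by (simp_all add: s_def dist_norm)
  then obtain w' where w': "w' \<in> T" "p + s *\<^sub>R v = N w'"
    using ball by blast
  have p_T: "dist c' p < dist c w'" "dist d' p < dist d w'"
    using away[OF \<open>0 < s\<close>] w'(2) dist_bar_motion[OF \<open>c \<noteq> d\<close> bars(2), of c w'] dist_bar_motion[OF \<open>c \<noteq> d\<close> bars(2), of d w']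
    by (simp_all add: N_def bar_motion_start bar_motion_finish[OF \<open>c \<noteq> d\<close>])
  have p_S: "dist a' p = dist a w" "dist b' p = dist b w"
    using w(2) dist_bar_motion[OF \<open>a \<noteq> b\<close> bars(1), of a w] dist_bar_motion[OF \<open>a \<noteq> b\<close> bars(1), of b w]
    by (simp_all add: M_def bar_motion_start bar_motion_finish[OF \<open>a \<noteq> b\<close>])
  define K where "K = {(a, a'), (b, b'), (c, c'), (d, d')}"
  have "M a = a'" "M b = b'" "N c = c'" "N d = d'"
    using \<open>a \<noteq> b\<close> \<open>c \<noteq> d\<close> by (simp_all add: M_def N_def bar_motion_start bar_motion_finish)
  then have K_expansion: "dist x y \<le> dist x' y'" if "(x, x') \<in> K" "(y, y') \<in> K" for x x' y y'
    using that bars expansion[of a c] expansion[of a d] expansion[of b c] expansion[of b d]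
    by (auto simp: K_def dist_commute)
  have "finite K"
    by (simp add: K_def)
  then obtain q where q: "\<And>x x'. (x, x') \<in> K \<Longrightarrow> dist x q \<le> dist x' p"
    using kirszbraun_finite[OF _ K_expansion, where p = p] by blast
  have "q \<in> S"
    using lens_subset_symmetric_slender_adornment[OF S w(1)] q[of a a'] q[of b b'] p_S
    by (auto simp: K_def dist_commute)
  moreover have "ball c (dist c w') \<inter> ball d (dist d w') \<subseteq> interior T"
    using lens_subset_symmetric_slender_adornment[OF T w'(1)]
    by (intro interior_maximal) auto
  then have "q \<in> interior T"
    using q[of c c'] q[of d d'] p_T by (force simp: K_def dist_commute)
  ultimately show False
    using disjoint by blast
qed

theorem mainTheorem6:
  fixes is_closed :: bool and n :: nat and X Y :: "nat \<Rightarrow> complex" and A :: "nat \<Rightarrow> complex set"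
  assumes bar_lengths:
    "\<forall>k\<in>chain_bars is_closed n. dist (Y k) (Y (chain_next n k)) = dist (X k) (X (chain_next n k))"
  and adorned:
    "\<forall>k\<in>chain_bars is_closed n.
       slender_adornment (A k) (X k) (X (chain_next n k)) \<and>
       symmetric_adornment (A k) (X k) (X (chain_next n k))"
  and expansion:
    "\<forall>i\<in>chain_bars is_closed n. \<forall>j\<in>chain_bars is_closed n.
       \<forall>p\<in>closed_segment (X i) (X (chain_next n i)). \<forall>q\<in>closed_segment (X j) (X (chain_next n j)).
         dist p q \<le> dist (carry n X Y i p) (carry n X Y j q)"
  and no_overlap_X:
    "\<forall>i\<in>chain_bars is_closed n. \<forall>j\<in>chain_bars is_closed n. i \<noteq> j \<longrightarrow> \<not> overlap (A i) (A j)"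
  shows
    "\<forall>i\<in>chain_bars is_closed n. \<forall>j\<in>chain_bars is_closed n. i \<noteq> j \<longrightarrow>
       \<not> overlap (carry n X Y i ` A i) (carry n X Y j ` A j)"
proof (intro ballI impI)
  have one_side: "carry n X Y k ` A k \<inter> interior (carry n X Y l ` A l) = {}"
    if k: "k \<in> chain_bars is_closed n" and l: "l \<in> chain_bars is_closed n" and "k \<noteq> l" for k l
    unfolding carry_def
  proof (rule carried_adornment_disjoint_interior)
    fix p q
    assume "p \<in> {X k, X (chain_next n k)}" "q \<in> {X l, X (chain_next n l)}"
    then show "dist p q \<le> dist (bar_motion (X k) (X (chain_next n k)) (Y k) (Y (chain_next n k)) p)
        (bar_motion (X l) (X (chain_next n l)) (Y l) (Y (chain_next n l)) q)"
      using expansion k l unfolding carry_def by auto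
  qed (use adorned bar_lengths no_overlap_X k l \<open>k \<noteq> l\<close> in \<open>auto simp: overlap_def\<close>)
  fix i j
  assume "i \<in> chain_bars is_closed n" "j \<in> chain_bars is_closed n" "i \<noteq> j"
  then show "\<not> overlap (carry n X Y i ` A i) (carry n X Y j ` A j)"
    using one_side by (auto simp: overlap_def)
qed

end
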